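(* Assume that the mask $\mathbf{M} \in \mathbb{R}^{L \times L}$ supports matrix-vector multiplication (computing $\mathbf{M}\mathbf{x}$ for $\mathbf{x}\in\mathbb{R}^L$) in time $T_{\mathbf{M}}(L)$. Then the general masked kernel attention with mask $\mathbf{M}$, where the kernel is computed through the feature map $\phi:\mathbb{R}^{d_{QK}}\rightarrow\mathbb{R}^{m}$, can be implemented in time $O((T_{\mathbf{M}}(L)+L)md)$.
   Context: Let $L$ be the number of input tokens, with query and key matrices $\mathbf{Q},\mathbf{K}\in\mathbb{R}^{L\times d_{QK}}$ and value matrix $\mathbf{V}\in\mathbb{R}^{L\times d}$. The general masked kernel attention with mask $\mathbf{M}\in\mathbb{R}^{L\times L}$ is $\mathrm{Att}_{\mathrm{K}}(\mathbf{Q},\mathbf{K},\mathbf{V},\mathbf{M})=\mathbf{D}^{-1}\mathbf{A}\mathbf{V}$, where $\mathbf{A}=\mathbf{M}\odot\mathcal{K}(\mathbf{Q},\mathbf{K})$, $\mathbf{D}=\mathrm{diag}(\mathbf{A}\mathbf{1}_L)$, $\odot$ is the element-wise (Hadamard) product, $\mathbf{1}_L$ is the all-ones vector of length $L$, and $\mathcal{K}(\mathbf{Q},\mathbf{K})_{i,j}=\mathrm{K}(\mathbf{q}_i^{\top},\mathbf{k}_j^{\top})$ for the $i$th row $\mathbf{q}_i$ of $\mathbf{Q}$ and $j$th row $\mathbf{k}_j$ of $\mathbf{K}$. The kernel is assumed to be low-rank (linearizable) via a feature map $\phi:\mathbb{R}^{d_{QK}}\rightarrow\mathbb{R}^{m}$,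 i.e. $\mathrm{K}(\mathbf{x},\mathbf{y})=\phi(\mathbf{x})^{\top}\phi(\mathbf{y})$ (possibly only in expectation for a random feature map), so that the $i$th output is $\mathbf{r}_i=\frac{\phi(\mathbf{q}_i^{\top})^{\top}\sum_{j}\mathbf{M}_{i,j}\phi(\mathbf{k}_j^{\top})\mathbf{v}_j}{\phi(\mathbf{q}_i^{\top})^{\top}\sum_{j}\mathbf{M}_{i,j}\phi(\mathbf{k}_j^{\top})}$, with $\mathbf{v}_j$ the $j$th row of $\mathbf{V}$. *)

theory Defs
  imports Complex_Main
begin

text \<open>Matrices are functions nat => nat => real; row i of Q is Q i.
  The feature map phi sends a query/key row to a feature vector (index k < m).
  Kernel: K(x,y) = phi(x)^T phi(y).\<close>

definition kern :: "nat \<Rightarrow> ((nat \<Rightarrow> real) \<Rightarrow> (nat \<Rightarrow> real)) \<Rightarrow> (nat \<Rightarrow> real) \<Rightarrow> (nat \<Rightarrow> real) \<Rightarrow> real" where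
  "kern m phi x y = (\<Sum>k<m. phi x k * phi y k)"

definition attA :: "nat \<Rightarrow> ((nat \<Rightarrow> real) \<Rightarrow> (nat \<Rightarrow> real)) \<Rightarrow> (nat \<Rightarrow> nat \<Rightarrow> real)
    \<Rightarrow> (nat \<Rightarrow> nat \<Rightarrow> real) \<Rightarrow> (nat \<Rightarrow> nat \<Rightarrow> real) \<Rightarrow> nat \<Rightarrow> nat \<Rightarrow> real" where
  "attA m phi M Q K i j = M i j * kern m phi (Q i) (K j)"

text \<open>Att_K(Q,K,V,M) = D^{-1} A V with D = diag(A 1_L); entry (i,c).
  (Division by a zero diagonal entry follows HOL's convention x/0 = 0.)\<close>
definition att :: "nat \<Rightarrow> nat \<Rightarrow> ((nat \<Rightarrow> real) \<Rightarrow> (nat \<Rightarrow> real)) \<Rightarrow> (nat \<Rightarrow> nat \<Rightarrow> real)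
    \<Rightarrow> (nat \<Rightarrow> nat \<Rightarrow> real) \<Rightarrow> (nat \<Rightarrow> nat \<Rightarrow> real) \<Rightarrow> (nat \<Rightarrow> nat \<Rightarrow> real) \<Rightarrow> nat \<Rightarrow> nat \<Rightarrow> real" where
  "att L m phi M Q K V i c =
     (\<Sum>j<L. attA m phi M Q K i j * V j c) / (\<Sum>j<L. attA m phi M Q K i j)"

datatype addr = PhiQ nat nat | PhiK nat nat | Val nat nat | Out nat nat | Tmp nat

text \<open>Arithmetic costs 1; the only access to the mask M is
  the matrix-vector product oracle MatVec out inp, which writes
  out j := (M x)_j for j < L where x_k = mem(inp k), and costs T_M(L).\<close>
datatype instr =
    Const addr real
  | Add addr addr addr
  | Sub addr addr addr
  | Mul addr addr addr
  | Div addr addr addr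
  | MatVec "nat \<Rightarrow> addr" "nat \<Rightarrow> addr"

type_synonym mem = "addr \<Rightarrow> real"

fun exec_instr :: "nat \<Rightarrow> (nat \<Rightarrow> nat \<Rightarrow> real) \<Rightarrow> instr \<Rightarrow> mem \<Rightarrow> mem" where
  "exec_instr L M (Const a r) s = s(a := r)"
| "exec_instr L M (Add a b c) s = s(a := s b + s c)"
| "exec_instr L M (Sub a b c) s = s(a := s b - s c)"
| "exec_instr L M (Mul a b c) s = s(a := s b * s c)"
| "exec_instr L M (Div a b c) s = s(a := s b / s c)"
| "exec_instr L M (MatVec out inp) s =
     foldl (\<lambda>s' j. s'(out j := (\<Sum>k<L. M j k * s (inp k)))) s [0..<L]"

definition run :: "nat \<Rightarrow> (nat \<Rightarrow> nat \<Rightarrow> real) \<Rightarrow> instr list \<Rightarrow> mem \<Rightarrow> mem" where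
  "run L M P s = foldl (\<lambda>s' ins. exec_instr L M ins s') s P"

fun instr_cost :: "real \<Rightarrow> instr \<Rightarrow> real" where
  "instr_cost t (MatVec _ _) = t"
| "instr_cost t _ = 1"

definition prog_cost :: "real \<Rightarrow> instr list \<Rightarrow> real" where
  "prog_cost t P = sum_list (map (instr_cost t) P)"

fun init_mem :: "((nat \<Rightarrow> real) \<Rightarrow> (nat \<Rightarrow> real)) \<Rightarrow> (nat \<Rightarrow> nat \<Rightarrow> real)
    \<Rightarrow> (nat \<Rightarrow> nat \<Rightarrow> real) \<Rightarrow> (nat \<Rightarrow> nat \<Rightarrow> real) \<Rightarrow> mem" where
  "init_mem phi Q K V (PhiQ i k) = phi (Q i) k"
| "init_mem phi Q K V (PhiK j k) = phi (K j) k"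
| "init_mem phi Q K V (Val j c) = V j c"
| "init_mem phi Q K V (Out i c) = 0"
| "init_mem phi Q K V (Tmp n) = 0"

end

theory Submission
  imports Defs "HOL-Library.Nat_Bijection"
begin

(* Writing the kernel through the features, the numerator of the i-th output in value column c is
   sum_k phi(q_i)_k sum_j M_ij phi(k_j)_k v_jc.  For a fixed feature k and column c the inner sums
   for all i at once form the single matrix-vector product M u with u_j = phi(k_j)_k v_jc, so they
   cost T_M(L) plus 3L arithmetic operations.  Doing this for the m features and d columns, and once
   more for a column of ones to obtain the normalisers D_ii, costs (d + 1) m (T_M(L) + 3L); the final
   L d divisions keep the total within 8 (T_M(L) + L) m d. *)

lemma run_Nil [simp]: "run L M [] s = s"
  by (simp add: run_def)

lemma run_Cons [simp]: "run L M (ins # P) s = run L M P (exec_instr L M ins s)"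
  by (simp add: run_def)

lemma run_append [simp]: "run L M (P @ P') s = run L M P' (run L M P s)"
  by (simp add: run_def)

definition assign :: "('b \<Rightarrow> addr) \<Rightarrow> ('b \<Rightarrow> real) \<Rightarrow> 'b list \<Rightarrow> mem \<Rightarrow> mem" where
  "assign T v xs s = foldl (\<lambda>s' x. s'(T x := v x)) s xs"

lemma assign_Nil [simp]: "assign T v [] s = s"
  by (simp add: assign_def)

lemma assign_Cons [simp]: "assign T v (x # xs) s = assign T v xs (s(T x := v x))"
  by (simp add: assign_def)

lemma assign_apply_other: "a \<notin> T ` set xs \<Longrightarrow> assign T v xs s a = s a"
  by (induction xs arbitrary: s) auto

lemma assign_apply_target:
  assumes "distinct (map T xs)" "x \<in> set xs"
  shows "assign T v xs s (T x) = v x"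
  using assms
proof (induction xs arbitrary: s)
  case (Cons y xs)
  show ?case
  proof (cases "x = y")
    case True
    with Cons.prems show ?thesis by (simp add: assign_apply_other)
  next
    case False
    with Cons show ?thesis by simp
  qed
qed simp

lemma assign_cong: "(\<And>x. x \<in> set xs \<Longrightarrow> v x = w x) \<Longrightarrow> assign T v xs s = assign T w xs s"
  unfolding assign_def by (rule foldl_cong) auto

lemma exec_MatVec:
  "exec_instr L M (MatVec out inp) s = assign out (\<lambda>j. \<Sum>k<L. M j k * s (inp k)) [0..<L] s"
  by (simp add: assign_def)

lemma run_map_binop:
  assumes exec: "\<And>a b c s. exec_instr L M (ins a b c) s = s(a := f (s b) (s c))"
    and "distinct xs"
    and "\<And>x y. x \<in> set xs \<Longrightarrow> y \<in> set xs \<Longrightarrow> x \<noteq> y \<Longrightarrow> T x \<noteq> G y \<and> T x \<noteq> H y"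
  shows "run L M (map (\<lambda>x. ins (T x) (G x) (H x)) xs) s = assign T (\<lambda>x. f (s (G x)) (s (H x))) xs s"
  using assms(2-)
proof (induction xs arbitrary: s)
  case (Cons x xs)
  let ?s' = "s(T x := f (s (G x)) (s (H x)))"
  have "run L M (map (\<lambda>x. ins (T x) (G x) (H x)) (x # xs)) s
      = assign T (\<lambda>y. f (?s' (G y)) (?s' (H y))) xs ?s'"
    using Cons by (simp add: exec)
  also have "\<dots> = assign T (\<lambda>y. f (s (G y)) (s (H y))) xs ?s'"
  proof (rule assign_cong)
    fix y assume y: "y \<in> set xs"
    with Cons.prems(1) have "x \<noteq> y" by auto
    with Cons.prems(2)[of x y] y have "T x \<noteq> G y" "T x \<noteq> H y" by auto
    then show "f (?s' (G y)) (?s' (H y)) = f (s (G y)) (s (H y))" by simp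
  qed
  finally show ?case by simp
qed simp

fun written :: "nat \<Rightarrow> instr \<Rightarrow> addr set" where
  "written L (Const a _) = {a}"
| "written L (Add a _ _) = {a}"
| "written L (Sub a _ _) = {a}"
| "written L (Mul a _ _) = {a}"
| "written L (Div a _ _) = {a}"
| "written L (MatVec out _) = out ` {..<L}"

lemma run_apply_unwritten:
  "(\<And>ins. ins \<in> set P \<Longrightarrow> a \<notin> written L ins) \<Longrightarrow> run L M P s a = s a"
proof (induction P arbitrary: s)
  case (Cons ins P)
  then have "a \<notin> written L ins" by simp
  then have "exec_instr L M ins s a = s a"
    by (cases ins) (simp_all add: exec_MatVec assign_apply_other atLeast0LessThan del: exec_instr.simps(6))
  with Cons show ?case by simp
qed simp

abbreviation one_reg :: addr where "one_reg \<equiv> Tmp (prod_encode (0, 0))"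
abbreviation x_reg :: "nat \<Rightarrow> addr" where "x_reg j \<equiv> Tmp (prod_encode (1, j))"
abbreviation y_reg :: "nat \<Rightarrow> addr" where "y_reg j \<equiv> Tmp (prod_encode (2, j))"
abbreviation den_reg :: "nat \<Rightarrow> addr" where "den_reg i \<equiv> Tmp (prod_encode (3, i))"

definition scratch :: "addr set" where
  "scratch = range x_reg \<union> range y_reg"

lemma not_in_scratch [simp]:
  "PhiQ i k \<notin> scratch" "PhiK j k \<notin> scratch" "Val j c \<notin> scratch" "Out i c \<notin> scratch"
  "den_reg i \<notin> scratch" "one_reg \<notin> scratch"
  by (auto simp: scratch_def)

definition linear_attention_sum ::
    "nat \<Rightarrow> nat \<Rightarrow> (nat \<Rightarrow> nat \<Rightarrow> real) \<Rightarrow> (nat \<Rightarrow> addr) \<Rightarrow> mem \<Rightarrow> nat \<Rightarrow> real" where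
  "linear_attention_sum L m M src s i = (\<Sum>k<m. s (PhiQ i k) * (\<Sum>j<L. M i j * (s (PhiK j k) * s (src j))))"

lemma linear_attention_sum_eq:
  assumes "\<And>k. s (PhiQ i k) = phi (Q i) k" and "\<And>j k. s (PhiK j k) = phi (K j) k"
  shows "linear_attention_sum L m M src s i = (\<Sum>j<L. attA m phi M Q K i j * s (src j))"
proof -
  have "linear_attention_sum L m M src s i = (\<Sum>k<m. \<Sum>j<L. M i j * (phi (Q i) k * phi (K j) k) * s (src j))"
    unfolding linear_attention_sum_def sum_distrib_left assms by (simp add: ac_simps)
  also have "\<dots> = (\<Sum>j<L. \<Sum>k<m. M i j * (phi (Q i) k * phi (K j) k) * s (src j))"
    by (rule sum.swap)
  also have "\<dots> = (\<Sum>j<L. attA m phi M Q K i j * s (src j))"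
    by (simp add: attA_def kern_def sum_distrib_left sum_distrib_right)
  finally show ?thesis .
qed

definition feature_block :: "nat \<Rightarrow> (nat \<Rightarrow> addr) \<Rightarrow> (nat \<Rightarrow> addr) \<Rightarrow> nat \<Rightarrow> instr list" where
  "feature_block L A src k =
     map (\<lambda>j. Mul (x_reg j) (PhiK j k) (src j)) [0..<L] @
     [MatVec y_reg x_reg] @
     map (\<lambda>i. Mul (x_reg i) (PhiQ i k) (y_reg i)) [0..<L] @
     map (\<lambda>i. Add (A i) (A i) (x_reg i)) [0..<L]"

lemma written_feature_block:
  "ins \<in> set (feature_block L A src k) \<Longrightarrow> written L ins \<subseteq> A ` {..<L} \<union> scratch"
  by (auto simp: feature_block_def scratch_def)

lemma feature_block_target:
  assumes A: "inj_on A {..<L}" "\<And>i. A i \<notin> scratch" and src: "\<And>j. src j \<notin> scratch"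
    and i: "i < L"
  shows "run L M (feature_block L A src k) s (A i)
    = s (A i) + s (PhiQ i k) * (\<Sum>j<L. M i j * (s (PhiK j k) * s (src j)))"
proof -
  define s1 where "s1 = assign x_reg (\<lambda>j. s (PhiK j k) * s (src j)) [0..<L] s"
  define s2 where "s2 = assign y_reg (\<lambda>i. \<Sum>j<L. M i j * s1 (x_reg j)) [0..<L] s1"
  define s3 where "s3 = assign x_reg (\<lambda>i. s2 (PhiQ i k) * s2 (y_reg i)) [0..<L] s2"
  have "run L M (map (\<lambda>j. Mul (x_reg j) (PhiK j k) (src j)) [0..<L]) s = s1"
    unfolding s1_def using src
    by (intro run_map_binop[where ins = Mul and f = "(*)"]) (simp_all add: scratch_def, metis rangeI)
  moreover have "exec_instr L M (MatVec y_reg x_reg) s1 = s2"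
    unfolding s2_def by (rule exec_MatVec)
  moreover have "run L M (map (\<lambda>i. Mul (x_reg i) (PhiQ i k) (y_reg i)) [0..<L]) s2 = s3"
    unfolding s3_def by (intro run_map_binop[where ins = Mul and f = "(*)"]) auto
  moreover have "run L M (map (\<lambda>i. Add (A i) (A i) (x_reg i)) [0..<L]) s3
      = assign A (\<lambda>i. s3 (A i) + s3 (x_reg i)) [0..<L] s3"
    using A by (intro run_map_binop[where ins = Add and f = "(+)"])
      (simp_all add: scratch_def, metis inj_on_contraD lessThan_iff rangeI)
  ultimately have run_eq:
    "run L M (feature_block L A src k) s = assign A (\<lambda>i. s3 (A i) + s3 (x_reg i)) [0..<L] s3"
    by (simp add: feature_block_def del: exec_instr.simps(6))
  have reg_distinct: "distinct (map x_reg [0..<L])" "distinct (map y_reg [0..<L])"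
    by (simp_all add: distinct_map inj_on_def)
  have s1_x: "s1 (x_reg j) = s (PhiK j k) * s (src j)" if "j < L" for j
    unfolding s1_def using reg_distinct that by (intro assign_apply_target[where x = j]) simp_all
  have "run L M (feature_block L A src k) s (A i) = s3 (A i) + s3 (x_reg i)"
    unfolding run_eq using A(1) i
    by (intro assign_apply_target[where x = i]) (simp_all add: distinct_map atLeast0LessThan)
  also have "s3 (A i) = s (A i)"
    using A(2) by (simp add: s1_def s2_def s3_def scratch_def assign_apply_other image_iff)
  also have "s3 (x_reg i) = s2 (PhiQ i k) * s2 (y_reg i)"
    unfolding s3_def using reg_distinct i by (intro assign_apply_target[where x = i]) simp_all
  also have "s2 (PhiQ i k) = s (PhiQ i k)"
    by (simp add: s1_def s2_def assign_apply_other image_iff)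
  also have "s2 (y_reg i) = (\<Sum>j<L. M i j * s1 (x_reg j))"
    unfolding s2_def using reg_distinct i by (intro assign_apply_target[where x = i]) simp_all
  also have "\<dots> = (\<Sum>j<L. M i j * (s (PhiK j k) * s (src j)))"
    using s1_x by simp
  finally show ?thesis .
qed

definition masked_kernel_prog :: "nat \<Rightarrow> (nat \<Rightarrow> addr) \<Rightarrow> (nat \<Rightarrow> addr) \<Rightarrow> nat \<Rightarrow> instr list" where
  "masked_kernel_prog L A src m = concat (map (feature_block L A src) [0..<m])"

lemma masked_kernel_prog_unwritten:
  assumes "\<And>i. a \<noteq> A i" "a \<notin> scratch"
  shows "run L M (masked_kernel_prog L A src m) s a = s a"
  using assms written_feature_block by (intro run_apply_unwritten) (fastforce simp: masked_kernel_prog_def)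

lemma masked_kernel_prog_target:
  assumes A: "inj_on A {..<L}" "\<And>i. A i \<notin> scratch" and src: "\<And>j. src j \<notin> scratch"
    and inputs: "\<And>i j k. PhiQ j k \<noteq> A i" "\<And>i j k. PhiK j k \<noteq> A i" "\<And>i j. src j \<noteq> A i"
    and i: "i < L"
  shows "run L M (masked_kernel_prog L A src m) s (A i) = s (A i) + linear_attention_sum L m M src s i"
proof (induction m)
  case 0
  then show ?case by (simp add: masked_kernel_prog_def linear_attention_sum_def)
next
  case (Suc m)
  define s' where "s' = run L M (masked_kernel_prog L A src m) s"
  have unchanged: "s' (PhiQ i k) = s (PhiQ i k)" "s' (PhiK j k) = s (PhiK j k)" "s' (src j) = s (src j)"
    for j k
    unfolding s'_def by (intro masked_kernel_prog_unwritten inputs src; simp)+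
  have "run L M (masked_kernel_prog L A src (Suc m)) s (A i)
      = s' (A i) + s' (PhiQ i m) * (\<Sum>j<L. M i j * (s' (PhiK j m) * s' (src j)))"
    unfolding s'_def using A src i by (simp add: masked_kernel_prog_def feature_block_target)
  also have "\<dots> = s (A i) + linear_attention_sum L (Suc m) M src s i"
    using Suc.IH by (simp add: s'_def [symmetric] unchanged linear_attention_sum_def)
  finally show ?case .
qed

definition numerator_prog :: "nat \<Rightarrow> nat \<Rightarrow> nat \<Rightarrow> instr list" where
  "numerator_prog L m d = concat (map (\<lambda>c. masked_kernel_prog L (\<lambda>i. Out i c) (\<lambda>j. Val j c) m) [0..<d])"

lemma numerator_prog_unwritten:
  assumes "\<And>i c. c < d \<Longrightarrow> a \<noteq> Out i c" "a \<notin> scratch"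
  shows "run L M (numerator_prog L m d) s a = s a"
  using assms written_feature_block
  by (intro run_apply_unwritten) (fastforce simp: numerator_prog_def masked_kernel_prog_def)

lemma numerator_prog_target:
  assumes "i < L" "c < d"
  shows "run L M (numerator_prog L m d) s (Out i c)
    = s (Out i c) + linear_attention_sum L m M (\<lambda>j. Val j c) s i"
  using assms(2)
proof (induction d)
  case (Suc d)
  define s' where "s' = run L M (numerator_prog L m d) s"
  have run_Suc: "run L M (numerator_prog L m (Suc d)) s
      = run L M (masked_kernel_prog L (\<lambda>i. Out i d) (\<lambda>j. Val j d) m) s'"
    by (simp add: numerator_prog_def s'_def)
  show ?case
  proof (cases "c = d")
    case True
    have unchanged: "s' (Out i d) = s (Out i d)" "s' (PhiQ i k) = s (PhiQ i k)"
      "s' (PhiK j k) = s (PhiK j k)" "s' (Val j d) = s (Val j d)" for j k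
      unfolding s'_def by (simp_all add: numerator_prog_unwritten)
    show ?thesis
      unfolding run_Suc True using assms(1)
      by (subst masked_kernel_prog_target) (auto simp: inj_on_def unchanged linear_attention_sum_def)
  next
    case False
    then have "run L M (numerator_prog L m (Suc d)) s (Out i c) = s' (Out i c)"
      unfolding run_Suc by (simp add: masked_kernel_prog_unwritten)
    with False Suc show ?thesis by (simp add: s'_def)
  qed
qed simp

definition denominator_prog :: "nat \<Rightarrow> nat \<Rightarrow> instr list" where
  "denominator_prog L m = Const one_reg 1 # masked_kernel_prog L den_reg (\<lambda>_. one_reg) m"

definition normalize_prog :: "nat \<Rightarrow> nat \<Rightarrow> instr list" where
  "normalize_prog L d = map (\<lambda>(c, i). Div (Out i c) (Out i c) (den_reg i)) (List.product [0..<d] [0..<L])"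

lemma normalize_prog_target:
  assumes "i < L" "c < d"
  shows "run L M (normalize_prog L d) s (Out i c) = s (Out i c) / s (den_reg i)"
proof -
  let ?out = "\<lambda>(c, i). Out i c" and ?den = "\<lambda>(c, i). den_reg i"
  let ?xs = "List.product [0..<d] [0..<L]"
  have prog_eq: "normalize_prog L d = map (\<lambda>x. Div (?out x) (?out x) (?den x)) ?xs"
    by (simp add: normalize_prog_def split_def)
  have run_eq: "run L M (normalize_prog L d) s = assign ?out (\<lambda>x. s (?out x) / s (?den x)) ?xs s"
    unfolding prog_eq by (rule run_map_binop[where ins = Div and f = "(/)"]) (auto simp: distinct_product)
  have "assign ?out (\<lambda>x. s (?out x) / s (?den x)) ?xs s (?out (c, i)) = s (?out (c, i)) / s (?den (c, i))"
    using assms by (intro assign_apply_target) (auto simp: distinct_map inj_on_def distinct_product)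
  then show ?thesis
    by (simp add: run_eq)
qed

definition attention_prog :: "nat \<Rightarrow> nat \<Rightarrow> nat \<Rightarrow> instr list" where
  "attention_prog L m d = denominator_prog L m @ numerator_prog L m d @ normalize_prog L d"

lemma attention_prog_correct:
  assumes "i < L" "c < d"
  shows "run L M (attention_prog L m d) (init_mem phi Q K V) (Out i c) = att L m phi M Q K V i c"
proof -
  define s1 where "s1 = run L M (denominator_prog L m) (init_mem phi Q K V)"
  define s2 where "s2 = run L M (numerator_prog L m d) s1"
  have s1_inputs: "s1 (PhiQ i k) = phi (Q i) k" "s1 (PhiK j k) = phi (K j) k" "s1 (Val j c) = V j c"
      "s1 (Out i c) = 0" for j k
    by (simp_all add: s1_def denominator_prog_def masked_kernel_prog_unwritten)
  have "s1 (den_reg i) = ((init_mem phi Q K V)(one_reg := 1)) (den_reg i)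
      + linear_attention_sum L m M (\<lambda>_. one_reg) ((init_mem phi Q K V)(one_reg := 1)) i"
    unfolding s1_def denominator_prog_def run_Cons exec_instr.simps(1) using assms(1)
    by (intro masked_kernel_prog_target) (auto simp: inj_on_def)
  also have "\<dots> = (\<Sum>j<L. attA m phi M Q K i j)"
    by (simp add: linear_attention_sum_eq[where phi = phi and Q = Q and K = K])
  finally have den: "s2 (den_reg i) = (\<Sum>j<L. attA m phi M Q K i j)"
    by (simp add: s2_def numerator_prog_unwritten)
  have num: "s2 (Out i c) = (\<Sum>j<L. attA m phi M Q K i j * V j c)"
    using assms by (simp add: s2_def numerator_prog_target s1_inputs
        linear_attention_sum_eq[where phi = phi and Q = Q and K = K])
  have "run L M (attention_prog L m d) (init_mem phi Q K V) = run L M (normalize_prog L d) s2"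
    by (simp add: attention_prog_def s1_def s2_def)
  then show ?thesis
    using assms by (simp add: normalize_prog_target num den att_def)
qed

lemma prog_cost_Nil [simp]: "prog_cost t [] = 0"
  by (simp add: prog_cost_def)

lemma prog_cost_Cons [simp]: "prog_cost t (ins # P) = instr_cost t ins + prog_cost t P"
  by (simp add: prog_cost_def)

lemma prog_cost_append [simp]: "prog_cost t (P @ P') = prog_cost t P + prog_cost t P'"
  by (simp add: prog_cost_def)

lemma prog_cost_concat: "prog_cost t (concat Ps) = (\<Sum>P\<leftarrow>Ps. prog_cost t P)"
  by (induction Ps) simp_all

lemma prog_cost_map: "prog_cost t (map f xs) = (\<Sum>x\<leftarrow>xs. instr_cost t (f x))"
  by (simp add: prog_cost_def comp_def)

lemma prog_cost_feature_block: "prog_cost t (feature_block L A src k) = 3 * real L + t"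
  by (simp add: feature_block_def prog_cost_map sum_list_triv)

lemma prog_cost_masked_kernel_prog: "prog_cost t (masked_kernel_prog L A src m) = real m * (3 * real L + t)"
  by (simp add: masked_kernel_prog_def prog_cost_concat prog_cost_feature_block sum_list_triv comp_def)

lemma prog_cost_attention_prog:
  "prog_cost t (attention_prog L m d) = 1 + (1 + real d) * real m * (3 * real L + t) + real L * real d"
  by (simp add: attention_prog_def denominator_prog_def numerator_prog_def normalize_prog_def
      prog_cost_concat prog_cost_map prog_cost_masked_kernel_prog sum_list_triv comp_def split_def algebra_simps)

lemma prog_cost_attention_prog_le:
  assumes "t \<ge> 0" "L > 0" "m > 0" "d > 0"
  shows "prog_cost t (attention_prog L m d) \<le> 8 * (t + real L) * real m * real d"
proof -
  from assms have L: "1 \<le> real L" and m: "1 \<le> real m" and d: "1 \<le> real d"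
    by simp_all
  have "(1 + real d) * (3 * real L + t) \<le> (2 * real d) * (3 * (t + real L))"
    using assms(1) d by (intro mult_mono) auto
  then have blocks:
    "real m * ((1 + real d) * (3 * real L + t)) \<le> real m * ((2 * real d) * (3 * (t + real L)))"
    using m by (intro mult_left_mono) auto
  have one_le: "1 \<le> (t + real L) * real m * real d"
    using assms(1) L m d by (simp add: mult_ge1_I)
  have "real L * 1 \<le> (t + real L) * real m"
    using assms(1) m by (intro mult_mono) auto
  then have "real L * real d \<le> (t + real L) * real m * real d"
    by (simp add: mult_right_mono)
  with blocks one_le show ?thesis
    by (simp add: prog_cost_attention_prog algebra_simps)
qed

theorem lemma3p1:
  "\<exists>C::real. C > 0 \<and>
     (\<forall>L m d :: nat. \<exists>P :: instr list.
        \<forall>(TM::real) (M::nat \<Rightarrow> nat \<Rightarrow> real) (phi::(nat \<Rightarrow> real) \<Rightarrow> (nat \<Rightarrow> real))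
          (Q::nat \<Rightarrow> nat \<Rightarrow> real) (K::nat \<Rightarrow> nat \<Rightarrow> real) (V::nat \<Rightarrow> nat \<Rightarrow> real).
          TM \<ge> 0 \<longrightarrow>
          (\<forall>i<L. \<forall>c<d. run L M P (init_mem phi Q K V) (Out i c) = att L m phi M Q K V i c)
          \<and> prog_cost TM P \<le> C * (TM + real L) * real m * real d)"
proof -
  (* If L, m or d vanishes the cost bound is 0, so the program must be empty; that is still correct,
     since either no output is inspected or m = 0 and att is 0 / 0 = 0. *)
  define impl where "impl L m d = (if L = 0 \<or> m = 0 \<or> d = 0 then [] else attention_prog L m d)" for L m d
  have correct: "run L M (impl L m d) (init_mem phi Q K V) (Out i c) = att L m phi M Q K V i c"
    if "i < L" "c < d" for L m d M phi Q K V i c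
    using that attention_prog_correct by (auto simp: impl_def att_def attA_def kern_def)
  have cost: "prog_cost t (impl L m d) \<le> 8 * (t + real L) * real m * real d" if "t \<ge> 0" for t L m d
    using that prog_cost_attention_prog_le by (auto simp: impl_def)
  show ?thesis
    using correct cost by (intro exI[of _ 8] conjI allI exI[of _ "impl _ _ _"]) auto
qed

end
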